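(* For $n\geqslant 1$ and $1\leqslant i\leqslant n$, inside $W_n$ we have $W_{i-1}\cap\big(s_i\cdots s_n\,W_{n-1}\,s_n\cdots s_i\big)=W_{i-2}$.
   Context: Standing setup: $\Gamma_1$ is an arbitrary finite Coxeter diagram with a preferred vertex $s_1$ (edge $\{s,t\}$ iff $m_{st}\geqslant3$; unlabelled edge means $m_{st}=3$, no edge means $m_{st}=2$). For $n\geqslant 2$, $\Gamma_n$ is obtained from $\Gamma_{n-1}$ by adding one new vertex $s_n$ joined by an unlabelled edge to $s_{n-1}$ and to no other vertex. $\Gamma_0$ is $\Gamma_1$ with $s_1$ deleted; $\Gamma_{-1}$ is $\Gamma_1$ with $s_1$ and all vertices joined to $s_1$ by an edge deleted. For $n\geqslant -1$, $S_n$ is the vertex set of $\Gamma_n$ and $W_n$ the Coxeter group; $S_n=S_0\cup\{s_1,\dots,s_n\}$ and $W_m$ ($m\leqslant n$) is identified with the standard parabolic subgroup of $W_n$ generated by $S_m$. *)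

theory Defs
  imports Main "HOL-Library.Extended_Nat"
begin

text \<open>Coxeter matrix on a vertex set V; the value \<infinity> is allowed (no relation).\<close>
definition coxeter_matrix :: "'a set \<Rightarrow> ('a \<Rightarrow> 'a \<Rightarrow> enat) \<Rightarrow> bool" where
  "coxeter_matrix V M \<longleftrightarrow>
     (\<forall>s\<in>V. M s s = 1) \<and> (\<forall>s\<in>V. \<forall>t\<in>V. M s t = M t s) \<and>
     (\<forall>s\<in>V. \<forall>t\<in>V. s \<noteq> t \<longrightarrow> M s t \<ge> 2)"

inductive cox_eq :: "'g set \<Rightarrow> ('g \<Rightarrow> 'g \<Rightarrow> enat) \<Rightarrow> 'g list \<Rightarrow> 'g list \<Rightarrow> bool"
  for S M where
  rel: "s \<in> S \<Longrightarrow> t \<in> S \<Longrightarrow> M s t = enat k \<Longrightarrow> cox_eq S M (concat (replicate k [s, t])) []"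
| refl: "cox_eq S M w w"
| sym: "cox_eq S M w v \<Longrightarrow> cox_eq S M v w"
| trans: "cox_eq S M u v \<Longrightarrow> cox_eq S M v w \<Longrightarrow> cox_eq S M u w"
| ctxt: "cox_eq S M x y \<Longrightarrow> cox_eq S M (u @ x @ v) (u @ y @ v)"

text \<open>The element of the Coxeter group W(S,M) represented by a word w (an equivalence class).\<close>
definition cox_class :: "'g set \<Rightarrow> ('g \<Rightarrow> 'g \<Rightarrow> enat) \<Rightarrow> 'g list \<Rightarrow> 'g list set" where
  "cox_class S M w = {v \<in> lists S. cox_eq S M w v}"

definition parabolic :: "'g set \<Rightarrow> ('g \<Rightarrow> 'g \<Rightarrow> enat) \<Rightarrow> 'g set \<Rightarrow> 'g list set set" where
  "parabolic S M T = cox_class S M ` lists T"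

text \<open>Vertices: Inl a for a vertex a of Gamma_1 other than s1, and Inr k for s_k (k \<ge> 1).
  Coxeter matrix of all the Gamma_n simultaneously.\<close>
definition ext_M :: "('a \<Rightarrow> 'a \<Rightarrow> enat) \<Rightarrow> 'a \<Rightarrow> ('a + nat) \<Rightarrow> ('a + nat) \<Rightarrow> enat" where
  "ext_M M s1 x y = (case (x, y) of
      (Inl a, Inl b) \<Rightarrow> M a b
    | (Inl a, Inr k) \<Rightarrow> (if k = 1 then M a s1 else 2)
    | (Inr k, Inl a) \<Rightarrow> (if k = 1 then M s1 a else 2)
    | (Inr j, Inr k) \<Rightarrow> (if j = k then 1 else if j = k + 1 \<or> k = j + 1 then 3 else 2))"

text \<open>S_n for n \<ge> -1: S_{-1} = vertices of Gamma_1 not equal and not joined to s1;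
  S_n = (V - {s1}) \<union> {s_1,...,s_n} for n \<ge> 0.\<close>
definition gens :: "'a set \<Rightarrow> ('a \<Rightarrow> 'a \<Rightarrow> enat) \<Rightarrow> 'a \<Rightarrow> int \<Rightarrow> ('a + nat) set" where
  "gens V M s1 n = (if n < 0 then Inl ` {a \<in> V. a \<noteq> s1 \<and> M a s1 < 3}
      else Inl ` (V - {s1}) \<union> Inr ` {k. 1 \<le> k \<and> int k \<le> n})"

end

theory Submission
  imports Defs Complex_Main
begin

text \<open>Let \<open>d = s\<^sub>i \<cdots> s\<^sub>n\<close>. An element \<open>x \<in> W\<^sub>i\<^sub>-\<^sub>1 \<inter> d W\<^sub>n\<^sub>-\<^sub>1 d\<^sup>-\<^sup>1\<close> satisfies \<open>x d = d u\<close> with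
  \<open>u \<in> W\<^sub>n\<^sub>-\<^sub>1\<close>. Write \<open>x\<close> as a word in \<open>S\<^sub>i\<^sub>-\<^sub>1\<close> that cannot be shortened; its first letter \<open>s\<close> is
  then crossed exactly once, so by Tits' reflection cocycle the reflection \<open>s\<close> is crossed an odd
  number of times by \<open>x d = d u\<close>. No reflection crossed by \<open>d\<close> lies in \<open>W\<^sub>i\<^sub>-\<^sub>1\<close>, hence \<open>u\<close> crosses
  \<open>d\<^sup>-\<^sup>1 s d\<close>, which therefore lies in \<open>W\<^sub>n\<^sub>-\<^sub>1\<close>; this is impossible unless \<open>s \<in> S\<^sub>i\<^sub>-\<^sub>2\<close>. Both
  non-memberships are read off from the geometric representation: a reflection \<open>p a p\<^sup>-\<^sup>1\<close> negates
  the vector \<open>p \<alpha>\<^sub>a\<close>, while \<open>W\<^sub>T\<close> fixes every coordinate outside \<open>T\<close>. Letters of \<open>S\<^sub>i\<^sub>-\<^sub>2\<close> commute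
  with \<open>d\<close>, so \<open>s\<close> moves across \<open>d\<close> and induction on the length of \<open>x\<close> finishes the proof.\<close>

section \<open>Words modulo the Coxeter relations\<close>

locale coxeter_system =
  fixes S :: "'g set" and M :: "'g \<Rightarrow> 'g \<Rightarrow> enat"
  assumes finite_S: "finite S"
    and coxeter_matrix: "coxeter_matrix S M"
begin

abbreviation cox_equiv :: "'g list \<Rightarrow> 'g list \<Rightarrow> bool" (infix "\<approx>" 50)
  where "v \<approx> w \<equiv> cox_eq S M v w"

lemmas [trans] = cox_eq.trans

lemma M_diag: "s \<in> S \<Longrightarrow> M s s = 1"
  and M_sym: "s \<in> S \<Longrightarrow> t \<in> S \<Longrightarrow> M s t = M t s"
  and M_ge_2: "s \<in> S \<Longrightarrow> t \<in> S \<Longrightarrow> s \<noteq> t \<Longrightarrow> 2 \<le> M s t"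
  using coxeter_matrix by (auto simp: coxeter_matrix_def)

lemma cox_eq_context: "x \<approx> y \<Longrightarrow> u @ x @ v \<approx> u @ y @ v"
  by (rule cox_eq.ctxt)

lemma cox_eq_append: "x \<approx> y \<Longrightarrow> u \<approx> v \<Longrightarrow> x @ u \<approx> y @ v"
  using cox_eq_context[of x y "[]" u] cox_eq_context[of u v y "[]"] by (auto intro: cox_eq.trans)

lemma cox_eq_square: "s \<in> S \<Longrightarrow> [s, s] \<approx> []"
  using cox_eq.rel[of s S s M 1] M_diag[of s] by (simp add: one_enat_def)

lemma cox_eq_cancel_square: "s \<in> S \<Longrightarrow> x @ [s, s] @ z \<approx> x @ z"
  using cox_eq_context[OF cox_eq_square] by fastforce

lemma cox_eq_word_rev: "p \<in> lists S \<Longrightarrow> p @ rev p \<approx> []"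
proof (induction p)
  case (Cons a p)
  then have "[a] @ (p @ rev p) @ [a] \<approx> [a] @ [] @ [a]"
    by (intro cox_eq_context) auto
  with cox_eq_square[of a] Cons.prems show ?case
    by (auto intro: cox_eq.trans)
qed (simp add: cox_eq.refl)

lemma cox_eq_rev_word: "p \<in> lists S \<Longrightarrow> rev p @ p \<approx> []"
  using cox_eq_word_rev[of "rev p"] by (simp add: in_lists_conv_set)

lemma cox_eq_cancel_word_rev: "p \<in> lists S \<Longrightarrow> x @ p @ rev p @ z \<approx> x @ z"
  using cox_eq_context[OF cox_eq_word_rev] by fastforce

lemma cox_eq_cancel_rev_word: "p \<in> lists S \<Longrightarrow> x @ rev p @ p @ z \<approx> x @ z"
  using cox_eq_context[OF cox_eq_rev_word] by fastforce

lemma rev_concat_replicate_pair: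
  "rev (concat (replicate k [s, t])) = concat (replicate k [t, s])"
  by (simp add: rev_concat)

lemma cox_eq_rev: "x \<approx> y \<Longrightarrow> rev x \<approx> rev y"
proof (induction rule: cox_eq.induct)
  case (rel s t k)
  then show ?case
    using cox_eq.rel[of t S s M k] M_sym[of s t] by (simp add: rev_concat_replicate_pair)
next
  case (ctxt x y u v)
  then show ?case
    using cox_eq_context[of "rev x" "rev y" "rev v" "rev u"] by simp
qed (auto intro: cox_eq.intros)

lemma conj_cox_eq_iff:
  assumes "p \<in> lists S"
  shows "rev p @ r @ p \<approx> [a] \<longleftrightarrow> r \<approx> p @ [a] @ rev p"
proof
  assume "rev p @ r @ p \<approx> [a]"
  then have "p @ (rev p @ r @ p) @ rev p \<approx> p @ [a] @ rev p"
    by (rule cox_eq_context)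
  moreover have "p @ (rev p @ r @ p) @ rev p \<approx> r"
    using cox_eq_cancel_word_rev[OF assms, of "[]" "r @ p @ rev p"]
      cox_eq_cancel_word_rev[OF assms, of r "[]"]
    by (auto intro: cox_eq.trans)
  ultimately show "r \<approx> p @ [a] @ rev p"
    by (auto intro: cox_eq.trans cox_eq.sym)
next
  assume "r \<approx> p @ [a] @ rev p"
  then have "rev p @ r @ p \<approx> rev p @ (p @ [a] @ rev p) @ p"
    by (rule cox_eq_context)
  moreover have "rev p @ (p @ [a] @ rev p) @ p \<approx> [a]"
    using cox_eq_cancel_rev_word[OF assms, of "[]" "[a] @ rev p @ p"]
      cox_eq_cancel_rev_word[OF assms, of "[a]" "[]"]
    by (auto intro: cox_eq.trans)
  ultimately show "rev p @ r @ p \<approx> [a]"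
    by (rule cox_eq.trans)
qed

lemma cox_eq_commute_if_M_2:
  assumes s: "s \<in> S" and t: "t \<in> S" and "M s t = 2"
  shows "[s, t] \<approx> [t, s]"
proof -
  have "[s, t, s, t] \<approx> []"
    using cox_eq.rel[of s S t M 2] assms by (simp add: numeral_eq_enat numeral_2_eq_2)
  then have "[t, s] @ [s, t, s, t] @ [] \<approx> [t, s] @ [] @ []"
    by (rule cox_eq_context)
  moreover have "[t, s, s, t, s, t] \<approx> [s, t]"
    using cox_eq_cancel_square[OF s, of "[t]" "[t, s, t]"]
      cox_eq_cancel_square[OF t, of "[]" "[s, t]"]
    by (auto intro: cox_eq.trans)
  ultimately show ?thesis
    by (auto intro: cox_eq.trans cox_eq.sym)
qed

lemma cox_eq_commute_lists:
  assumes "\<And>k a. k \<in> set w \<Longrightarrow> a \<in> set d \<Longrightarrow> [k, a] \<approx> [a, k]"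
  shows "w @ d \<approx> d @ w"
  using assms
proof (induction w)
  case (Cons k w)
  have "k # d \<approx> d @ [k]"
    using Cons.prems
  proof (induction d)
    case (Cons a d)
    then have "[] @ [k, a] @ d \<approx> [] @ [a, k] @ d" "[a] @ (k # d) @ [] \<approx> [a] @ (d @ [k]) @ []"
      by (intro cox_eq_context; auto)+
    then show ?case by (auto intro: cox_eq.trans)
  qed (simp add: cox_eq.refl)
  then have "[] @ (k # d) @ w \<approx> [] @ (d @ [k]) @ w"
    by (rule cox_eq_context)
  moreover have "[k] @ (w @ d) @ [] \<approx> [k] @ (d @ w) @ []"
    using Cons by (intro cox_eq_context) auto
  ultimately show ?case by (auto intro: cox_eq.trans)
qed (simp add: cox_eq.refl)

section \<open>Tits' reflection cocycle\<close>

definition word_reflection :: "'g list \<Rightarrow> nat \<Rightarrow> 'g list" where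
  "word_reflection w j = take j w @ [w ! j] @ rev (take j w)"

text \<open>\<open>odd_crossing w r\<close> says that the reflection \<open>r\<close> occurs an odd number of times among the
  reflections \<open>word_reflection w j\<close> crossed by the word \<open>w\<close> (lemma \<open>odd_crossing_count\<close>).\<close>
primrec odd_crossing :: "'g list \<Rightarrow> 'g list \<Rightarrow> bool" where
  "odd_crossing [] r = False"
| "odd_crossing (s # w) r = ((r \<approx> [s]) \<noteq> odd_crossing w (s # r @ [s]))"

lemma odd_crossing_cong_reflection: "r \<approx> r' \<Longrightarrow> odd_crossing w r = odd_crossing w r'"
proof (induction w arbitrary: r r')
  case (Cons s w)
  have "[s] @ r @ [s] \<approx> [s] @ r' @ [s]"
    using Cons.prems by (rule cox_eq_context)
  then show ?case
    using Cons by (auto intro: cox_eq.trans cox_eq.sym)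
qed simp

lemma odd_crossing_append:
  "odd_crossing (u @ w) r = (odd_crossing u r \<noteq> odd_crossing w (rev u @ r @ u))"
  by (induction u arbitrary: r) auto

lemma odd_crossing_count:
  assumes "w \<in> lists S"
  shows "odd_crossing w r = odd (length (filter (\<lambda>j. r \<approx> word_reflection w j) [0..<length w]))"
  using assms
proof (induction w rule: rev_induct)
  case (snoc a w)
  then have w: "w \<in> lists S" by simp
  have "odd_crossing (w @ [a]) r = (odd_crossing w r \<noteq> (rev w @ r @ w \<approx> [a]))"
    by (simp add: odd_crossing_append)
  moreover have "rev w @ r @ w \<approx> [a] \<longleftrightarrow> r \<approx> word_reflection (w @ [a]) (length w)"
    using conj_cox_eq_iff[OF w] by (simp add: word_reflection_def)
  moreover have "filter (\<lambda>j. r \<approx> word_reflection (w @ [a]) j) [0..<length w]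
      = filter (\<lambda>j. r \<approx> word_reflection w j) [0..<length w]"
    by (rule filter_cong) (auto simp: word_reflection_def nth_append)
  ultimately show ?case
    using snoc.IH[OF w] by simp
qed simp

lemma odd_crossing_obtain:
  assumes "w \<in> lists S" and "odd_crossing w r"
  obtains j where "j < length w" and "r \<approx> word_reflection w j"
proof -
  have "filter (\<lambda>j. r \<approx> word_reflection w j) [0..<length w] \<noteq> []"
    using odd_crossing_count[OF assms(1), of r] assms(2) by auto
  then show ?thesis
    using that by (auto simp: filter_empty_conv)
qed

lemma word_reflection_in_lists: "w \<in> lists T \<Longrightarrow> j < length w \<Longrightarrow> word_reflection w j \<in> lists T"
  by (auto simp: word_reflection_def in_lists_conv_set dest: in_set_takeD)

definition alternating :: "'g \<Rightarrow> 'g \<Rightarrow> nat \<Rightarrow> 'g list" where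
  "alternating s t n = map (\<lambda>l. if even l then s else t) [0..<n]"

lemma alternating_add: "even a \<Longrightarrow> alternating s t (a + b) = alternating s t a @ alternating s t b"
  by (rule nth_equalityI) (auto simp: alternating_def nth_append)

lemma concat_replicate_pair: "concat (replicate k [s, t]) = alternating s t (2 * k)"
proof (induction k)
  case (Suc k)
  have "alternating s t (2 + 2 * k) = [s, t] @ alternating s t (2 * k)"
    by (subst alternating_add) (auto simp: alternating_def numeral_2_eq_2)
  with Suc show ?case by simp
qed (simp add: alternating_def)

lemma word_reflection_alternating:
  assumes "j < n"
  shows "word_reflection (alternating s t n) j = alternating s t (2 * j + 1)"
proof (rule nth_equalityI)
  have take: "take j (alternating s t n) = alternating s t j"
    using assms by (simp add: alternating_def take_map)
  show "length (word_reflection (alternating s t n) j) = length (alternating s t (2 * j + 1))"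
    using assms by (simp add: word_reflection_def take alternating_def)
  fix l assume "l < length (word_reflection (alternating s t n) j)"
  then have "l < 2 * j + 1"
    using assms by (simp add: word_reflection_def take alternating_def)
  then consider "l \<le> j" | "j < l" "l \<le> 2 * j"
    by linarith
  then show "word_reflection (alternating s t n) j ! l = alternating s t (2 * j + 1) ! l"
  proof cases
    case 1
    then show ?thesis
      using assms by (auto simp: word_reflection_def take nth_append alternating_def)
  next
    case 2
    then show ?thesis
      using assms by (auto simp: word_reflection_def take nth_append rev_nth alternating_def)
  qed
qed

text \<open>The \<open>2k\<close> reflections crossed by \<open>(st)\<^sup>k\<close> are the \<open>k\<close> distinct ones of the dihedral group, each
  crossed twice.\<close>
lemma not_odd_crossing_relation:
  assumes "s \<in> S" "t \<in> S" "M s t = enat k"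
  shows "\<not> odd_crossing (concat (replicate k [s, t])) r"
proof -
  let ?P = "\<lambda>j. r \<approx> alternating s t (2 * j + 1)"
  have lists: "alternating s t n \<in> lists S" for n
    using assms by (auto simp: alternating_def)
  have rel: "alternating s t (2 * k) \<approx> []"
    using cox_eq.rel[of s S t M k] assms by (simp add: concat_replicate_pair)
  have periodic: "?P (j + k) = ?P j" for j
  proof -
    have "alternating s t (2 * (j + k) + 1) = alternating s t (2 * k) @ alternating s t (2 * j + 1)"
      using alternating_add[of "2 * k" s t "2 * j + 1"] by (simp add: algebra_simps)
    moreover have "alternating s t (2 * k) @ alternating s t (2 * j + 1) \<approx> alternating s t (2 * j + 1)"
      using cox_eq_append[OF rel cox_eq.refl] by simp
    ultimately show ?thesis
      by (auto intro: cox_eq.trans cox_eq.sym)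
  qed
  have "[0..<2 * k] = [0..<k] @ map (\<lambda>j. j + k) [0..<k]"
    by (simp add: map_add_upt upt_add_eq_append[of 0 k k, simplified] mult_2)
  then have "filter (\<lambda>j. r \<approx> word_reflection (alternating s t (2 * k)) j) [0..<2 * k]
      = filter ?P ([0..<k] @ map (\<lambda>j. j + k) [0..<k])"
    by (metis (no_types, lifting) filter_cong word_reflection_alternating atLeastLessThan_iff
        set_upt)
  also have "length \<dots> = 2 * length (filter ?P [0..<k])"
    using periodic by (simp add: filter_map o_def)
  finally show ?thesis
    using odd_crossing_count[OF lists[of "2 * k"]] by (simp add: concat_replicate_pair alternating_def)
qed

lemma odd_crossing_cong: "w \<approx> v \<Longrightarrow> odd_crossing w = odd_crossing v"
proof (induction rule: cox_eq.induct)
  case (rel s t k)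
  then show ?case
    using not_odd_crossing_relation by auto
next
  case (ctxt x y u v)
  show ?case
  proof
    fix r
    have "rev x @ (rev u @ r @ u) @ x \<approx> rev y @ (rev u @ r @ u) @ y"
      using ctxt.hyps by (intro cox_eq_append cox_eq_rev cox_eq.refl)
    then show "odd_crossing (u @ x @ v) r = odd_crossing (u @ y @ v) r"
      using odd_crossing_cong_reflection by (simp add: odd_crossing_append ctxt.IH)
  qed
qed auto

lemma reflection_word_square:
  assumes "p \<in> lists S" and "a \<in> S"
  shows "(p @ [a] @ rev p) @ (p @ [a] @ rev p) \<approx> []"
proof -
  have "(p @ [a] @ rev p) @ (p @ [a] @ rev p) \<approx> p @ [a, a] @ rev p"
    using cox_eq_cancel_rev_word[OF assms(1), of "p @ [a]" "[a] @ rev p"] by simp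
  also have "p @ [a, a] @ rev p \<approx> p @ rev p"
    by (rule cox_eq_cancel_square[OF assms(2)])
  also have "p @ rev p \<approx> []"
    by (rule cox_eq_word_rev[OF assms(1)])
  finally show ?thesis .
qed

lemma deletion_condition:
  assumes w: "a @ [x] @ b @ [y] @ c \<in> lists S"
    and eq: "a @ [x] @ rev a \<approx> (a @ [x] @ b) @ [y] @ rev (a @ [x] @ b)"
  shows "a @ [x] @ b @ [y] @ c \<approx> a @ b @ c"
proof -
  let ?w = "a @ [x] @ b @ [y] @ c" and ?p = "a @ [x] @ b"
  let ?tx = "a @ [x] @ rev a" and ?ty = "?p @ [y] @ rev ?p"
  have p: "?p \<in> lists S" and xy: "x \<in> S" "y \<in> S" and a: "a \<in> lists S"
    using w by auto
  have "?tx @ ?ty @ ?w \<approx> ?ty @ ?ty @ ?w"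
    using cox_eq_append[OF eq cox_eq.refl, of "?ty @ ?w"] by simp
  also have "\<dots> \<approx> ?w"
    using cox_eq_append[OF reflection_word_square[OF p xy(2)] cox_eq.refl, of ?w] by simp
  finally have reflections_cancel: "?tx @ ?ty @ ?w \<approx> ?w" .
  have "?ty @ ?w \<approx> ?p @ [y, y] @ c"
    using cox_eq_cancel_rev_word[OF p, of "?p @ [y]" "[y] @ c"] by simp
  also have "\<dots> \<approx> ?p @ c"
    by (rule cox_eq_cancel_square[OF xy(2)])
  finally have "?tx @ ?ty @ ?w \<approx> ?tx @ ?p @ c"
    by (rule cox_eq_append[OF cox_eq.refl])
  also have "\<dots> \<approx> a @ [x, x] @ b @ c"
    using cox_eq_cancel_rev_word[OF a, of "a @ [x]" "[x] @ b @ c"] by simp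
  also have "\<dots> \<approx> a @ b @ c"
    by (rule cox_eq_cancel_square[OF xy(1)])
  finally show ?thesis
    using reflections_cancel by (blast intro: cox_eq.sym cox_eq.trans)
qed

text \<open>The first letter of a word that cannot be shortened by deleting letters is crossed exactly
  once: a second crossing would allow deleting two letters.\<close>
lemma odd_crossing_first_letter:
  assumes w: "s # w \<in> lists S"
    and irreducible: "\<And>v. v \<in> lists (set (s # w)) \<Longrightarrow> length v \<le> length w \<Longrightarrow> \<not> s # w \<approx> v"
  shows "odd_crossing (s # w) [s]"
proof -
  have no_recrossing: "\<not> [s] \<approx> word_reflection (s # w) j" if "0 < j" "j < Suc (length w)" for j
  proof
    define b where "b = take (j - 1) w"
    define y where "y = w ! (j - 1)"
    define c where "c = drop j w"
    have "drop (j - 1) w = y # c"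
      using that Cons_nth_drop_Suc[of "j - 1" w] by (simp add: y_def c_def)
    then have decomp: "s # w = [] @ [s] @ b @ [y] @ c"
      by (metis append_take_drop_id append_Cons append_Nil b_def)
    assume "[s] \<approx> word_reflection (s # w) j"
    then have "[] @ [s] @ rev [] \<approx> ([] @ [s] @ b) @ [y] @ rev ([] @ [s] @ b)"
      using that by (simp add: word_reflection_def b_def y_def take_Cons' nth_Cons')
    with w have "s # w \<approx> b @ c"
      unfolding decomp using deletion_condition[of "[]" s b y c] by simp
    moreover have "b @ c \<in> lists (set (s # w))" "length (b @ c) \<le> length w"
      by (auto simp: b_def c_def dest: in_set_takeD in_set_dropD)
    ultimately show False
      using irreducible by blast
  qed
  have "filter (\<lambda>j. [s] \<approx> word_reflection (s # w) j) [1..<length (s # w)] = []"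
    using no_recrossing by (auto simp only: filter_empty_conv set_upt atLeastLessThan_iff length_Cons)
  moreover have "[s] \<approx> word_reflection (s # w) 0"
    by (simp add: word_reflection_def cox_eq.refl)
  moreover have "[0..<length (s # w)] = 0 # [1..<length (s # w)]"
    by (simp only: upt_conv_Cons length_Cons zero_less_Suc One_nat_def)
  ultimately have "filter (\<lambda>j. [s] \<approx> word_reflection (s # w) j) [0..<length (s # w)] = [0]"
    by (simp del: upt_Suc)
  then show ?thesis
    unfolding odd_crossing_count[OF w] by (simp del: upt_Suc)
qed

lemma cox_class_eq_iff:
  assumes "a \<in> lists S"
  shows "cox_class S M a = cox_class S M b \<longleftrightarrow> a \<approx> b"
  using assms unfolding cox_class_def by (auto intro: cox_eq.trans cox_eq.sym cox_eq.refl)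

end

section \<open>Intersecting a parabolic subgroup with a conjugate of another\<close>

locale parabolic_conj = coxeter_system S M for S :: "'g set" and M +
  fixes I J K :: "'g set" and d :: "'g list"
  assumes I_subset: "I \<subseteq> S" and J_subset: "J \<subseteq> S" and K_subset_I: "K \<subseteq> I"
    and K_subset_J: "K \<subseteq> J" and d_lists: "d \<in> lists S"
    and K_commutes_d: "\<And>k a. k \<in> K \<Longrightarrow> a \<in> set d \<Longrightarrow> [k, a] \<approx> [a, k]"
    and reflections_d_notin_I:
      "\<And>j v. j < length d \<Longrightarrow> v \<in> lists I \<Longrightarrow> \<not> word_reflection d j \<approx> v"
    and conj_d_notin_J: "\<And>s v. s \<in> I \<Longrightarrow> s \<notin> K \<Longrightarrow> v \<in> lists J \<Longrightarrow> \<not> rev d @ [s] @ d \<approx> v"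
begin

lemma crossed_reflection_conj_in_J:
  assumes w: "w \<in> lists I" and u: "u \<in> lists J" and eq: "w @ d \<approx> d @ u"
    and s: "s \<in> I" and crossed: "odd_crossing w [s]"
  obtains v where "v \<in> lists J" and "rev d @ [s] @ d \<approx> v"
proof -
  have d_not_crossing: "\<not> odd_crossing d r" if "r \<in> lists I" for r
  proof
    assume "odd_crossing d r"
    with d_lists obtain j where "j < length d" "r \<approx> word_reflection d j"
      by (rule odd_crossing_obtain)
    with that reflections_d_notin_I show False
      by (blast intro: cox_eq.sym)
  qed
  have "rev w @ [s] @ w \<in> lists I"
    using w s by auto
  then have "odd_crossing (w @ d) [s]"
    using crossed d_not_crossing by (simp add: odd_crossing_append)
  then have "odd_crossing (d @ u) [s]"
    using odd_crossing_cong[OF eq] by simp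
  moreover have "\<not> odd_crossing d [s]"
    using d_not_crossing s by simp
  ultimately have "odd_crossing u (rev d @ [s] @ d)"
    by (simp add: odd_crossing_append)
  moreover have "u \<in> lists S"
    using u J_subset by auto
  ultimately obtain j where "j < length u" "rev d @ [s] @ d \<approx> word_reflection u j"
    using odd_crossing_obtain by blast
  with u show ?thesis
    using that word_reflection_in_lists by blast
qed

lemma commuting_letter_crosses_d:
  assumes s: "s \<in> K" and eq: "(s # w) @ d \<approx> d @ u"
  shows "w @ d \<approx> d @ (s # u)"
proof -
  have "s \<in> S"
    using s K_subset_I I_subset by auto
  then have "w @ d \<approx> [s, s] @ w @ d"
    using cox_eq.sym[OF cox_eq_cancel_square[of s "[]" "w @ d"]] by simp
  also have "\<dots> \<approx> [s] @ (d @ u) @ []"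
    using cox_eq_context[OF eq, of "[s]" "[]"] by simp
  also have "\<dots> \<approx> d @ (s # u)"
    using cox_eq_append[OF cox_eq_commute_lists[of "[s]" d] cox_eq.refl, of u] K_commutes_d s
    by simp
  finally show ?thesis .
qed

lemma parabolic_conj_descent:
  "w \<in> lists I \<Longrightarrow> u \<in> lists J \<Longrightarrow> w @ d \<approx> d @ u \<Longrightarrow> \<exists>w'\<in>lists K. w \<approx> w'"
proof (induction "length w" arbitrary: w u rule: less_induct)
  case less
  show ?case
  proof (cases "\<exists>v\<in>lists I. length v < length w \<and> w \<approx> v")
    case True
    then obtain v where v: "v \<in> lists I" "length v < length w" "w \<approx> v"
      by blast
    have "v @ d \<approx> d @ u"
      using cox_eq_append[OF cox_eq.sym[OF v(3)] cox_eq.refl] less.prems(3)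
      by (rule cox_eq.trans)
    with less.hyps[OF v(2) v(1) less.prems(2)] v(3) show ?thesis
      by (blast intro: cox_eq.trans)
  next
    case irreducible: False
    show ?thesis
    proof (cases w)
      case Nil
      then show ?thesis
        by (auto intro: cox_eq.refl)
    next
      case (Cons s w1)
      have s: "s \<in> I" and w1: "w1 \<in> lists I"
        using less.prems(1) Cons by auto
      have "odd_crossing w [s]"
        unfolding Cons
      proof (rule odd_crossing_first_letter)
        show "s # w1 \<in> lists S"
          using less.prems(1) Cons I_subset by auto
        show "\<not> s # w1 \<approx> v" if "v \<in> lists (set (s # w1))" "length v \<le> length w1" for v
        proof -
          have "v \<in> lists I"
            using that(1) s w1 by (auto simp: in_lists_conv_set)
          with irreducible that(2) Cons show ?thesis
            by auto
        qed
      qed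
      show ?thesis
      proof (cases "s \<in> K")
        case True
        have "w1 @ d \<approx> d @ (s # u)"
          using commuting_letter_crosses_d[OF True] less.prems(3) Cons by simp
        then obtain w1' where "w1' \<in> lists K" "w1 \<approx> w1'"
          using less.hyps[of w1 "s # u"] w1 less.prems(2) True K_subset_J Cons by auto
        then have "s # w1' \<in> lists K" "w \<approx> s # w1'"
          using True Cons cox_eq_context[of w1 w1' "[s]" "[]"] by auto
        then show ?thesis
          by blast
      next
        case False
        obtain v where "v \<in> lists J" "rev d @ [s] @ d \<approx> v"
          using crossed_reflection_conj_in_J[OF less.prems s \<open>odd_crossing w [s]\<close>] .
        with conj_d_notin_J[OF s False] show ?thesis
          by blast
      qed
    qed
  qed
qed

lemma parabolic_inter_conj:
  "parabolic S M I \<inter> (\<lambda>u. cox_class S M (d @ u @ rev d)) ` lists J = parabolic S M K"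
proof (intro set_eqI iffI)
  fix X
  assume "X \<in> parabolic S M I \<inter> (\<lambda>u. cox_class S M (d @ u @ rev d)) ` lists J"
  then obtain w u where w: "w \<in> lists I" "X = cox_class S M w"
    and u: "u \<in> lists J" "X = cox_class S M (d @ u @ rev d)"
    unfolding parabolic_def by blast
  have w_lists: "w \<in> lists S"
    using w(1) I_subset by auto
  then have "w \<approx> d @ u @ rev d"
    using cox_class_eq_iff[of w "d @ u @ rev d"] w(2) u(2) by simp
  then have "w @ d \<approx> (d @ u) @ rev d @ d @ []"
    using cox_eq_append[OF _ cox_eq.refl, of w "d @ u @ rev d" d] by simp
  also have "\<dots> \<approx> d @ u"
    using cox_eq_cancel_rev_word[OF d_lists, of "d @ u" "[]"] by simp
  finally obtain w' where "w' \<in> lists K" "w \<approx> w'"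
    using parabolic_conj_descent w(1) u(1) by blast
  then show "X \<in> parabolic S M K"
    using w(2) cox_class_eq_iff[OF w_lists] unfolding parabolic_def by auto
next
  fix X
  assume "X \<in> parabolic S M K"
  then obtain w where w: "w \<in> lists K" "X = cox_class S M w"
    unfolding parabolic_def by blast
  have "d @ w @ rev d \<approx> (w @ d) @ rev d"
    using cox_eq_append[OF cox_eq_commute_lists cox_eq.refl] K_commutes_d w(1)
    by (auto intro: cox_eq.sym)
  also have "\<dots> \<approx> w"
    using cox_eq_cancel_word_rev[OF d_lists, of w "[]"] by simp
  finally have "w \<approx> d @ w @ rev d"
    by (rule cox_eq.sym)
  moreover have "w \<in> lists S"
    using w(1) K_subset_I I_subset by auto
  ultimately have "X = cox_class S M (d @ w @ rev d)"
    using w(2) cox_class_eq_iff by simp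
  then show "X \<in> parabolic S M I \<inter> (\<lambda>u. cox_class S M (d @ u @ rev d)) ` lists J"
    unfolding parabolic_def using w K_subset_I K_subset_J by blast
qed

end

section \<open>Dihedral rotations\<close>

lemma sin_mult_linear_recurrence:
  fixes x :: "nat \<Rightarrow> real"
  assumes rec: "\<And>j. x (Suc (Suc j)) = 2 * cos \<theta> * x (Suc j) - x j"
  shows "sin \<theta> * x j = sin (real j * \<theta>) * x 1 - sin ((real j - 1) * \<theta>) * x 0"
proof (induction j rule: induct_nat_012)
  case (ge2 j)
  have sin_step: "sin (b + \<theta>) + sin (b - \<theta>) = 2 * cos \<theta> * sin b" for b
    by (simp add: sin_add sin_diff)
  have "(real j + 1) * \<theta> = real j * \<theta> + \<theta>" "(real j - 1) * \<theta> = real j * \<theta> - \<theta>"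
    "(real j + 2) * \<theta> = (real j * \<theta> + \<theta>) + \<theta>"
    by (simp_all add: algebra_simps)
  with ge2 rec[of j] sin_step[of "real j * \<theta>"] sin_step[of "real j * \<theta> + \<theta>"] show ?case
    by (simp add: add.commute) algebra
qed simp_all

lemma linear_recurrence_periodic:
  fixes x :: "nat \<Rightarrow> real"
  assumes m: "3 \<le> m" and rec: "\<And>j. x (Suc (Suc j)) = 2 * cos (2 * pi / m) * x (Suc j) - x j + K"
  shows "x m = x 0"
proof -
  define \<theta> where "\<theta> = 2 * pi / m"
  have "0 < \<theta>" "\<theta> < pi"
    using m by (simp_all add: \<theta>_def divide_less_eq)
  then have sin_pos: "0 < sin \<theta>" and "cos \<theta> < 1"
    using sin_gt_zero cos_monotone_0_pi[of 0 \<theta>] by auto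
  define q where "q = K / (2 - 2 * cos \<theta>)"
  define y where "y j = x j - q" for j
  have "2 - 2 * cos \<theta> \<noteq> 0"
    using \<open>cos \<theta> < 1\<close> by simp
  then have "K = (2 - 2 * cos \<theta>) * q"
    by (simp add: q_def)
  then have K: "K = 2 * q - 2 * cos \<theta> * q"
    by (simp add: algebra_simps)
  have "y (Suc (Suc j)) = 2 * cos \<theta> * y (Suc j) - y j" for j
    using rec[of j] unfolding y_def \<theta>_def[symmetric] K by (simp add: algebra_simps)
  then have "sin \<theta> * y m = sin (real m * \<theta>) * y 1 - sin ((real m - 1) * \<theta>) * y 0"
    by (rule sin_mult_linear_recurrence)
  moreover have "sin (real m * \<theta>) = 0"
    using m by (simp add: \<theta>_def)
  moreover have "sin ((real m - 1) * \<theta>) = - sin \<theta>"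
  proof -
    have "(real m - 1) * \<theta> = 2 * pi - \<theta>"
      using m by (simp add: \<theta>_def field_simps)
    then show ?thesis
      by (simp add: sin_diff)
  qed
  ultimately show ?thesis
    using sin_pos by (simp add: y_def)
qed

text \<open>\<open>F\<close> is the action of \<open>st\<close> on the coefficients \<open>(p, q)\<close> of \<open>x + p \<alpha>\<^sub>s + q \<alpha>\<^sub>t\<close> in the geometric
  representation, \<open>a\<close> and \<open>b\<close> being the pairings of \<open>x\<close> with \<open>\<alpha>\<^sub>s\<close> and \<open>\<alpha>\<^sub>t\<close>; its linear part is a
  rotation by \<open>2\<pi>/k\<close>.\<close>
lemma dihedral_coefficients_periodic:
  fixes a b :: real and k :: nat
  assumes k: "2 \<le> k"
  defines "c \<equiv> cos (pi / k)"
  defines "F \<equiv> \<lambda>z. (2 * c * (2 * c * fst z - snd z - 2 * b) - fst z - 2 * a,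
                    2 * c * fst z - snd z - 2 * b)"
  shows "(F ^^ k) (0, 0) = (0, 0)"
proof (cases "k = 2")
  case True
  then have "c = 0"
    by (simp add: c_def)
  with True show ?thesis
    by (simp add: F_def numeral_2_eq_2)
next
  case False
  define z where "z j = (F ^^ j) (0, 0)" for j
  have two_cos: "2 * cos (2 * pi / k) = 4 * c\<^sup>2 - 2"
    using cos_double_cos[of "pi / k"] by (simp add: c_def)
  text \<open>Cayley-Hamilton for the linear part of \<open>F\<close> (trace \<open>4c\<^sup>2 - 2\<close>, determinant \<open>1\<close>) gives a
    second-order recurrence in each coordinate, whose constant term is read off at the origin.\<close>
  have "\<forall>w. f (F (F w)) = (4 * c\<^sup>2 - 2) * f (F w) - f w
      + (f (F (F (0, 0))) - (4 * c\<^sup>2 - 2) * f (F (0, 0)))" if "f = fst \<or> f = snd" for f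
    using that by (auto simp: F_def power2_eq_square algebra_simps)
  then have "f (z (Suc (Suc j))) = 2 * cos (2 * pi / k) * f (z (Suc j)) - f (z j)
      + (f (F (F (0, 0))) - (4 * c\<^sup>2 - 2) * f (F (0, 0)))" if "f = fst \<or> f = snd" for f j
    using that by (simp only: z_def funpow.simps comp_apply two_cos)
  then have "fst (z k) = fst (z 0)" "snd (z k) = snd (z 0)"
    using k False by (auto intro!: linear_recurrence_periodic)
  then show ?thesis
    by (simp add: z_def prod_eq_iff)
qed

section \<open>The geometric representation\<close>

context coxeter_system
begin

text \<open>Tits' geometric representation on \<open>S \<Rightarrow> real\<close>: \<open>cox_form\<close> is the bilinear form
  \<open>B(\<alpha>\<^sub>s, \<alpha>\<^sub>t) = - cos (\<pi> / m\<^sub>s\<^sub>t)\<close> on the simple roots \<open>\<alpha>\<^sub>s = simple_root s\<close>.\<close>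
definition cox_form :: "'g \<Rightarrow> 'g \<Rightarrow> real" where
  "cox_form s t = (case M s t of enat m \<Rightarrow> - cos (pi / real m) | \<infinity> \<Rightarrow> - 1)"

definition form_pairing :: "'g \<Rightarrow> ('g \<Rightarrow> real) \<Rightarrow> real" where
  "form_pairing s x = (\<Sum>t\<in>S. cox_form s t * x t)"

definition simple_root :: "'g \<Rightarrow> 'g \<Rightarrow> real" where
  "simple_root s = (\<lambda>t. if t = s then 1 else 0)"

definition geom_reflect :: "'g \<Rightarrow> ('g \<Rightarrow> real) \<Rightarrow> 'g \<Rightarrow> real" where
  "geom_reflect s x = (\<lambda>t. x t - 2 * form_pairing s x * simple_root s t)"

primrec geom_act :: "'g list \<Rightarrow> ('g \<Rightarrow> real) \<Rightarrow> 'g \<Rightarrow> real" where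
  "geom_act [] x = x"
| "geom_act (s # w) x = geom_reflect s (geom_act w x)"

lemma cox_form_diag: "s \<in> S \<Longrightarrow> cox_form s s = 1"
  using M_diag[of s] by (simp add: cox_form_def one_enat_def)

lemma cox_form_M_2: "M s t = 2 \<Longrightarrow> cox_form s t = 0"
  by (simp add: cox_form_def numeral_eq_enat)

lemma cox_form_M_3: "M s t = 3 \<Longrightarrow> cox_form s t = - 1 / 2"
  by (simp add: cox_form_def numeral_eq_enat cos_60)

lemma cox_form_negative: "3 \<le> M s t \<Longrightarrow> cox_form s t < 0"
proof (cases "M s t")
  case (enat m)
  moreover assume "3 \<le> M s t"
  ultimately have "0 < cos (pi / m)"
    by (intro cos_gt_zero) (auto simp: numeral_eq_enat divide_less_eq)
  with enat show ?thesis
    by (simp add: cox_form_def)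
qed (simp add: cox_form_def)

lemma form_pairing_add: "form_pairing g (\<lambda>h. x h + y h) = form_pairing g x + form_pairing g y"
  by (simp add: form_pairing_def sum.distrib algebra_simps)

lemma form_pairing_diff: "form_pairing g (\<lambda>h. x h - y h) = form_pairing g x - form_pairing g y"
  by (simp add: form_pairing_def sum_subtractf algebra_simps)

lemma form_pairing_scale: "form_pairing g (\<lambda>h. c * x h) = c * form_pairing g x"
  by (simp add: form_pairing_def sum_distrib_left algebra_simps)

lemma form_pairing_indicator:
  "A \<subseteq> S \<Longrightarrow> form_pairing g (\<lambda>h. if h \<in> A then 1 else 0) = (\<Sum>h\<in>A. cox_form g h)"
  using finite_S by (simp add: form_pairing_def if_distrib sum.If_cases Int_absorb1 cong: if_cong)

lemma form_pairing_simple_root: "a \<in> S \<Longrightarrow> form_pairing g (simple_root a) = cox_form g a"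
  using form_pairing_indicator[of "{a}" g] by (simp add: simple_root_def)

lemma geom_reflect_involution:
  assumes "s \<in> S"
  shows "geom_reflect s (geom_reflect s x) = x"
proof -
  have "form_pairing s (geom_reflect s x) = - form_pairing s x"
    using assms by (simp add: geom_reflect_def form_pairing_diff form_pairing_scale
        form_pairing_simple_root cox_form_diag)
  then show ?thesis
    by (simp add: geom_reflect_def)
qed

lemma geom_act_append: "geom_act (u @ v) x = geom_act u (geom_act v x)"
  by (induction u) auto

lemma geom_act_scale: "geom_act w (\<lambda>h. c * x h) = (\<lambda>h. c * geom_act w x h)"
  by (induction w) (auto simp: geom_reflect_def form_pairing_scale algebra_simps)

lemma geom_act_coordinate: "u \<notin> set w \<Longrightarrow> geom_act w x u = x u"
  by (induction w) (auto simp: geom_reflect_def simple_root_def)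

lemma geom_act_relation:
  assumes s: "s \<in> S" and t: "t \<in> S" and k: "M s t = enat k"
  shows "geom_act (concat (replicate k [s, t])) x = x"
proof (cases "s = t")
  case True
  then have "k = 1"
    using M_diag[OF s] k by (simp add: one_enat_def)
  with True show ?thesis
    using geom_reflect_involution[OF s] by simp
next
  case False
  have k2: "2 \<le> k"
    using M_ge_2[OF s t False] k by (simp add: numeral_eq_enat)
  define c where "c = cos (pi / k)"
  define a where "a = form_pairing s x"
  define b where "b = form_pairing t x"
  define F where "F \<equiv> \<lambda>z. (2 * c * (2 * c * fst z - snd z - 2 * b) - fst z - 2 * a,
                    2 * c * fst z - snd z - 2 * b)"
  define Y where "Y z = (\<lambda>h. x h + fst z * simple_root s h + snd z * simple_root t h)"
    for z :: "real \<times> real"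
  have form: "cox_form s t = - c" "cox_form t s = - c" "cox_form s s = 1" "cox_form t t = 1"
    using k M_sym[OF s t] cox_form_diag s t by (simp_all add: cox_form_def c_def)
  have pairing_Y: "form_pairing g (Y z) = form_pairing g x + fst z * cox_form g s + snd z * cox_form g t"
    for g z
    by (simp add: Y_def form_pairing_add form_pairing_scale form_pairing_simple_root s t)
  have reflect_Y: "geom_reflect g (Y z) = Y (if g = s then fst z - 2 * form_pairing g (Y z) else fst z,
      if g = t then snd z - 2 * form_pairing g (Y z) else snd z)" if "g \<in> {s, t}" for g z
    using that False by (auto simp: fun_eq_iff Y_def geom_reflect_def algebra_simps)
  have step: "geom_act [s, t] (Y z) = Y (F z)" for z
    using False by (simp add: reflect_Y pairing_Y form F_def a_def[symmetric] b_def[symmetric]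
        algebra_simps)
  have "geom_act (concat (replicate j [s, t])) x = Y ((F ^^ j) (0, 0))" for j
  proof (induction j)
    case (Suc j)
    then show ?case
      using geom_act_append[of "[s, t]" "concat (replicate j [s, t])" x] step by simp
  qed (simp add: Y_def)
  moreover have "(F ^^ k) (0, 0) = (0, 0)"
    unfolding F_def c_def by (rule dihedral_coefficients_periodic[OF k2])
  ultimately show ?thesis
    by (simp add: Y_def)
qed

lemma geom_act_cong: "w \<approx> v \<Longrightarrow> geom_act w = geom_act v"
proof (induction rule: cox_eq.induct)
  case (rel s t k)
  then show ?case
    using geom_act_relation by auto
next
  case (ctxt x y u v)
  show ?case
    by (rule ext) (simp add: geom_act_append ctxt.IH)
qed auto

text \<open>The reflection \<open>p a p\<^sup>-\<^sup>1\<close> negates the vector \<open>geom_act p \<alpha>\<^sub>a\<close>, whereas every element of \<open>W\<^sub>T\<close>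
  fixes the coordinates outside \<open>T\<close>.\<close>
lemma reflection_notin_parabolic:
  assumes p: "p \<in> lists S" and a: "a \<in> S" and v: "v \<in> lists T" and u: "u \<notin> T"
    and nonzero: "geom_act p (simple_root a) u \<noteq> 0"
  shows "\<not> p @ [a] @ rev p \<approx> v"
proof
  assume eq: "p @ [a] @ rev p \<approx> v"
  let ?\<beta> = "geom_act p (simple_root a)"
  have "geom_act (rev p) (geom_act p y) = y" for y
    using geom_act_cong[OF cox_eq_rev_word[OF p]] geom_act_append[of "rev p" p y] by simp
  moreover have "geom_reflect a (simple_root a) = (\<lambda>h. - simple_root a h)"
    by (simp add: geom_reflect_def form_pairing_simple_root[OF a] cox_form_diag[OF a] fun_eq_iff)
  ultimately have "geom_act (p @ [a] @ rev p) ?\<beta> = (\<lambda>h. - ?\<beta> h)"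
    using geom_act_scale[of p "- 1"] by (simp add: geom_act_append)
  moreover have "geom_act v ?\<beta> u = ?\<beta> u"
    using v u by (intro geom_act_coordinate) auto
  ultimately have "?\<beta> u = - ?\<beta> u"
    using geom_act_cong[OF eq] by metis
  with nonzero show False
    by simp
qed

end

section \<open>The diagrams \<open>\<Gamma>\<^sub>n\<close>\<close>

lemma gens_int: "gens V M s1 (int m) = Inl ` (V - {s1}) \<union> Inr ` {1..m}"
  by (auto simp: gens_def)

lemma gens_minus_one: "gens V M s1 (-1) = Inl ` {a \<in> V. a \<noteq> s1 \<and> M a s1 < 3}"
  by (simp add: gens_def)

lemma finite_gens:
  assumes "finite V"
  shows "finite (gens V M s1 k)"
proof -
  have "{j. 1 \<le> j \<and> int j \<le> k} \<subseteq> {..nat k}"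
    by auto
  with assms show ?thesis
    by (simp add: gens_def finite_subset)
qed

lemma coxeter_matrix_ext_M:
  assumes s1: "s1 \<in> V" and M: "coxeter_matrix V M"
  shows "coxeter_matrix (gens V M s1 k) (ext_M M s1)"
  using M s1 unfolding coxeter_matrix_def gens_def ext_M_def
  by (auto split: if_splits; metis)

locale extended_diagram =
  fixes V :: "'a set" and M :: "'a \<Rightarrow> 'a \<Rightarrow> enat" and s1 :: 'a and n i :: nat
  assumes finite_V: "finite V" and s1_in_V: "s1 \<in> V" and coxeter_V: "coxeter_matrix V M"
    and i_pos: "1 \<le> i" and i_le_n: "i \<le> n"
begin

abbreviation "Sn \<equiv> gens V M s1 (int n)"
abbreviation "Sn1 \<equiv> gens V M s1 (int n - 1)"
abbreviation "Si1 \<equiv> gens V M s1 (int i - 1)"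
abbreviation "Si2 \<equiv> gens V M s1 (int i - 2)"
abbreviation "Mx \<equiv> ext_M M s1"

sublocale coxeter_system Sn Mx
  using finite_V s1_in_V coxeter_V by unfold_locales (auto intro: finite_gens coxeter_matrix_ext_M)

notation cox_equiv (infix "\<approx>" 50)

definition chain :: "('a + nat) list" where
  "chain = map Inr [i..<n + 1]"

lemma set_chain: "set chain = Inr ` {i..n}"
  by (auto simp: chain_def)

lemma length_chain: "length chain = n + 1 - i"
  using i_le_n by (simp add: chain_def del: upt_Suc)

lemma take_chain: "j < length chain \<Longrightarrow> take j chain = map Inr [i..<i + j]"
  by (simp add: chain_def length_chain take_map take_upt del: upt_Suc)

lemma nth_chain: "j < length chain \<Longrightarrow> chain ! j = Inr (i + j)"
  by (simp add: chain_def length_chain del: upt_Suc)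

lemma Sn1_eq: "Sn1 = Inl ` (V - {s1}) \<union> Inr ` {1..n - 1}"
  using i_pos i_le_n gens_int[of V M s1 "n - 1"] by simp

lemma Si1_eq: "Si1 = Inl ` (V - {s1}) \<union> Inr ` {1..i - 1}"
  using i_pos gens_int[of V M s1 "i - 1"] by simp

lemma Si2_eq: "Si2 = (if i = 1 then Inl ` {a \<in> V. a \<noteq> s1 \<and> M a s1 < 3}
    else Inl ` (V - {s1}) \<union> Inr ` {1..i - 2})"
proof (cases "i = 1")
  case True
  then show ?thesis
    by (simp add: gens_minus_one)
next
  case False
  then have "int i - 2 = int (i - 2)"
    using i_pos by simp
  with False show ?thesis
    by (simp only: gens_int if_False)
qed

lemma Si1_minus_Si2:
  assumes "s \<in> Si1" and "s \<notin> Si2"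
  shows "(2 \<le> i \<and> s = Inr (i - 1)) \<or> (i = 1 \<and> (\<exists>a. s = Inl a \<and> a \<in> V \<and> a \<noteq> s1 \<and> 3 \<le> M a s1))"
  using assms i_pos unfolding Si1_eq Si2_eq by (cases "i = 1") (auto simp: not_less image_iff)

lemma gens_subsets: "Si1 \<subseteq> Sn" "Sn1 \<subseteq> Sn" "Si2 \<subseteq> Si1" "Si2 \<subseteq> Sn1"
  using i_le_n by (auto simp: gens_int Si1_eq Sn1_eq Si2_eq split: if_splits)

lemma chain_lists: "chain \<in> lists Sn"
  using i_pos by (auto simp: set_chain gens_int)

lemma Si2_commutes_chain:
  assumes k: "k \<in> Si2" and a: "a \<in> set chain"
  shows "[k, a] \<approx> [a, k]"
proof (rule cox_eq_commute_if_M_2)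
  show "k \<in> Sn" "a \<in> Sn"
    using k a gens_subsets chain_lists by auto
  obtain l where l: "a = Inr l" "i \<le> l"
    using a by (auto simp: set_chain)
  show "Mx k a = 2"
  proof (cases "i = 1")
    case True
    obtain b where b: "k = Inl b" "b \<in> V" "b \<noteq> s1" "M b s1 < 3"
      using k True unfolding Si2_eq by auto
    moreover have "2 \<le> M b s1"
      using coxeter_V b s1_in_V by (auto simp: coxeter_matrix_def)
    ultimately have "M b s1 = 2"
      by (cases "M b s1") (auto simp: numeral_eq_enat)
    with b l show ?thesis
      by (simp add: ext_M_def)
  next
    case False
    with k l i_pos show ?thesis
      by (auto simp: Si2_eq ext_M_def)
  qed
qed

lemma chain_reflections_notin_Si1:
  assumes j: "j < length chain" and v: "v \<in> lists Si1"
  shows "\<not> word_reflection chain j \<approx> v"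
proof -
  have take: "take j chain = map Inr [i..<i + j]" and nth: "chain ! j = Inr (i + j)"
    using j by (simp_all add: take_chain nth_chain)
  show ?thesis
    unfolding word_reflection_def nth
  proof (rule reflection_notin_parabolic[OF _ _ v])
    show "take j chain \<in> lists Sn"
      using chain_lists by (auto simp: in_lists_conv_set dest: in_set_takeD)
    show "Inr (i + j) \<in> Sn" "Inr (i + j) \<notin> Si1"
      using j i_pos by (auto simp: length_chain gens_int Si1_eq)
    have "Inr (i + j) \<notin> set (take j chain)"
      unfolding take by auto
    then have "geom_act (take j chain) (simple_root (Inr (i + j))) (Inr (i + j)) = 1"
      by (simp add: geom_act_coordinate simple_root_def)
    then show "geom_act (take j chain) (simple_root (Inr (i + j))) (Inr (i + j)) \<noteq> 0"
      by simp
  qed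
qed

text \<open>Along the chain, \<open>\<alpha>\<^bsub>s\<^sub>k\<^sub>+\<^sub>1\<^esub>\<close> pairs to \<open>-1/2\<close> with \<open>\<alpha>\<^bsub>s\<^sub>k\<^esub>\<close> and to \<open>0\<close> with the earlier roots, so each further
  reflection adds the same multiple of the next simple root.\<close>
lemma geom_act_rev_chain_prefix:
  assumes s: "s \<in> Sn" and orthogonal: "\<And>k. i < k \<Longrightarrow> k \<le> n \<Longrightarrow> cox_form (Inr k) s = 0"
  shows "i \<le> k \<Longrightarrow> k \<le> n \<Longrightarrow> geom_act (rev (map Inr [i..<Suc k])) (simple_root s)
    = (\<lambda>h. simple_root s h - 2 * cox_form (Inr i) s * (if h \<in> Inr ` {i..k} then 1 else 0))"
proof (induction k)
  case (Suc k)
  show ?case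
  proof (cases "Suc k = i")
    case True
    then show ?thesis
      using form_pairing_simple_root[OF s]
      by (auto simp: geom_reflect_def simple_root_def fun_eq_iff)
  next
    case False
    then have k: "i \<le> k" "k < n"
      using Suc.prems by auto
    define g :: "'a + nat" where "g = Inr (Suc k)"
    define c where "c = 2 * cox_form (Inr i) s"
    let ?ind = "\<lambda>h. if h \<in> Inr ` {i..k} then 1 else 0 :: real"
    have "Inr ` {i..k} \<subseteq> Sn"
      using k i_pos by (auto simp: gens_int)
    then have "form_pairing g ?ind = (\<Sum>l\<in>{i..k}. cox_form g (Inr l))"
      by (simp add: form_pairing_indicator sum.reindex)
    also have "\<dots> = cox_form g (Inr k) + (\<Sum>l\<in>{i..<k}. cox_form g (Inr l))"
      using k by (simp add: atLeastLessThanSuc_atLeastAtMost[symmetric] add.commute)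
    also have "\<dots> = - 1 / 2"
      by (simp add: g_def cox_form_M_3 cox_form_M_2 ext_M_def)
    finally have pairing: "form_pairing g (\<lambda>h. simple_root s h - c * ?ind h) = c / 2"
      using orthogonal[of "Suc k"] k s
      by (simp add: form_pairing_diff form_pairing_scale form_pairing_simple_root g_def)
    have IH: "geom_act (rev (map Inr [i..<Suc k])) (simple_root s) = (\<lambda>h. simple_root s h - c * ?ind h)"
      using Suc.IH k by (simp add: c_def)
    have "rev (map Inr [i..<Suc (Suc k)]) = g # rev (map Inr [i..<Suc k])"
      using k by (simp add: g_def)
    moreover have "(if h \<in> Inr ` {i..Suc k} then 1 else 0) = ?ind h + simple_root g h" for h
      using k by (auto simp: g_def simple_root_def)
    ultimately show ?thesis
      unfolding c_def[symmetric] by (simp add: IH pairing geom_reflect_def algebra_simps del: upt_Suc)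
  qed
qed (use i_pos in simp)

lemma chain_conj_notin_Sn1:
  assumes s: "s \<in> Si1" "s \<notin> Si2" and v: "v \<in> lists Sn1"
  shows "\<not> rev chain @ [s] @ chain \<approx> v"
proof -
  have s_Sn: "s \<in> Sn"
    using s gens_subsets by auto
  have orthogonal: "cox_form (Inr k) s = 0" if "i < k" "k \<le> n" for k
    using Si1_minus_Si2[OF s] that by (auto intro!: cox_form_M_2 simp: ext_M_def)
  have nonzero: "cox_form (Inr i) s \<noteq> 0"
    using Si1_minus_Si2[OF s]
  proof
    assume "2 \<le> i \<and> s = Inr (i - 1)"
    then have "Mx (Inr i) s = 3"
      by (auto simp: ext_M_def)
    then show ?thesis
      by (simp add: cox_form_M_3)
  next
    assume "i = 1 \<and> (\<exists>a. s = Inl a \<and> a \<in> V \<and> a \<noteq> s1 \<and> 3 \<le> M a s1)"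
    then obtain a where "i = 1" "s = Inl a" "a \<in> V" "3 \<le> M a s1"
      by blast
    then have "3 \<le> Mx (Inr i) s"
      using coxeter_V s1_in_V by (simp add: ext_M_def coxeter_matrix_def)
    then show ?thesis
      using cox_form_negative by (metis less_irrefl)
  qed
  have "geom_act (rev chain) (simple_root s)
    = (\<lambda>h. simple_root s h - 2 * cox_form (Inr i) s * (if h \<in> Inr ` {i..n} then 1 else 0))"
    unfolding chain_def Suc_eq_plus1[symmetric]
    by (rule geom_act_rev_chain_prefix[OF s_Sn orthogonal i_le_n]) auto
  moreover have "s \<noteq> Inr n"
    using s i_le_n by (auto simp: Si1_eq)
  ultimately have "geom_act (rev chain) (simple_root s) (Inr n) \<noteq> 0"
    using nonzero i_le_n by (simp add: simple_root_def)
  moreover have "rev chain \<in> lists Sn" "Inr n \<notin> Sn1"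
    using chain_lists by (auto simp: Sn1_eq)
  ultimately show ?thesis
    using reflection_notin_parabolic[OF _ s_Sn v] by fastforce
qed

sublocale parabolic_conj Sn Mx Si1 Sn1 Si2 chain
  using gens_subsets chain_lists Si2_commutes_chain chain_reflections_notin_Si1 chain_conj_notin_Sn1
  by unfold_locales auto

end

theorem proposition3p2:
  fixes V :: "'a set" and M :: "'a \<Rightarrow> 'a \<Rightarrow> enat" and s1 :: 'a and n i :: nat
  assumes "finite V" and "s1 \<in> V" and "coxeter_matrix V M"
    and "1 \<le> n" and "1 \<le> i" and "i \<le> n"
  shows "parabolic (gens V M s1 (int n)) (ext_M M s1) (gens V M s1 (int i - 1))
         \<inter> (\<lambda>u. cox_class (gens V M s1 (int n)) (ext_M M s1)
                  (map Inr [i..<n+1] @ u @ rev (map Inr [i..<n+1])))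
              ` lists (gens V M s1 (int n - 1))
       = parabolic (gens V M s1 (int n)) (ext_M M s1) (gens V M s1 (int i - 2))"
proof -
  interpret extended_diagram V M s1 n i
    using assms by unfold_locales
  show ?thesis
    using parabolic_inter_conj unfolding chain_def .
qed

end
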